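(* Let $\mathcal{G}_1,\mathcal{G}_2,\ldots$ be classes of functions from $S$ to $[0,1]$ and $K>0$ a constant such that for every $j$ there exists $M_j\ge 1$ with, for all $n\ge1$ and all $0<\epsilon<1$, \[ P\Big\{\sup_{g\in\mathcal{G}_j}|L(g)-\widehat{L}_n(g)|>\epsilon\Big\}\le K\,2^j\sqrt{j}^{\,j}\Big(\frac{M_j}{\epsilon}\Big)^j\exp(-n\epsilon^2/128). \] Define the complexity penalty $r(n,j)=\sqrt{\dfrac{128\,j\log(2j^{1/2}M_j n)}{n}}$. Let the random pair $(X,Y)$ be such that $\inf_j\inf_{g\in\mathcal{G}_j}L(g)=L^*$. Then the estimator $g^*_n$ based on Structural Risk Minimization (with this penalty) is strongly consistent, i.e. $L(g^*_n)\to L^*$ almost surely.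
   Context: $S\subset\mathbb{R}^d$. $(X,Y)$ is a random pair with values in $S\times[0,1]$ and $(X_1,Y_1),\ldots,(X_n,Y_n)$ is an i.i.d. sample from its distribution. For $g:S\to[0,1]$, $L(g)=E[(g(X)-Y)^2]$ (conditional on the sample for data-dependent $g$) and $\widehat{L}_n(g)=\frac1n\sum_{i=1}^n(g(X_i)-Y_i)^2$. $L^*$ is the infimum of $L(g)$ over all measurable $g$. For each $j$, $\hat g_{n,j}$ minimizes $\widehat{L}_n$ over $\mathcal{G}_j$ (assumed to exist); $\widetilde{L}_{n,j}=\widehat{L}_n(\hat g_{n,j})+r(n,j)$; $g^*_n$ is a function among the $\hat g_{n,j}$ minimizing $\widetilde{L}_{n,j}$ over $j$. Suprema over function classes are assumed measurable. *)

theory Defs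
  imports "HOL-Probability.Probability"
begin

definition risk :: "('a::euclidean_space \<times> real) measure \<Rightarrow> ('a \<Rightarrow> real) \<Rightarrow> real" where
  "risk D g = (\<integral>z. (g (fst z) - snd z)^2 \<partial>D)"

definition emp_risk :: "(nat \<Rightarrow> 'w \<Rightarrow> 'a \<times> real) \<Rightarrow> nat \<Rightarrow> ('a \<Rightarrow> real) \<Rightarrow> 'w \<Rightarrow> real" where
  "emp_risk Z n g \<omega> = (\<Sum>i=1..n. (g (fst (Z i \<omega>)) - snd (Z i \<omega>))^2) / real n"

definition meas_fun :: "'a::euclidean_space set \<Rightarrow> ('a \<Rightarrow> real) set" where
  "meas_fun S = {g. g \<in> borel_measurable borel \<and> (\<forall>x\<in>S. g x \<in> {0..1})}"

definition bayes_risk :: "('a::euclidean_space \<times> real) measure \<Rightarrow> 'a set \<Rightarrow> real" where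
  "bayes_risk D S = (INF g \<in> meas_fun S. risk D g)"

definition srm_penalty :: "(nat \<Rightarrow> real) \<Rightarrow> nat \<Rightarrow> nat \<Rightarrow> real" where
  "srm_penalty Mj n j = sqrt (128 * real j * ln (2 * sqrt (real j) * Mj j * real n) / real n)"

end

theory Submission
  imports Defs "HOL-Real_Asymp.Real_Asymp"
begin

text \<open>The penalty is calibrated to the deviation bound: \<open>r(n,j)\<close> satisfies
  \<open>exp (-n r(n,j)\<^sup>2/128) = (2 \<surd>j M\<^sub>j n)\<^sup>-\<^sup>j\<close>, which cancels the polynomial factor of
  the \<open>j\<close>-th tail bound, so the probability that some class deviates by more than \<open>\<epsilon> + r(n,j)\<close>
  is at most \<open>\<Sum>\<^sub>j K exp (-n\<epsilon>\<^sup>2/128) / (\<epsilon>n)\<^sup>j\<close>, summable in \<open>n\<close>. By Borel--Cantelli, almost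
  surely every class eventually deviates by at most \<open>\<epsilon> + r(n,j)\<close>. On that event the
  penalised choice \<open>J\<close> competes with any fixed class \<open>j\<close> and any \<open>g \<in> \<G>\<^sub>j\<close>:
  \<open>L(g\<^sup>*\<^sub>n) \<le> L(g) + \<Delta>\<^sub>n\<^sub>,\<^sub>j + r(n,j) + (\<Delta>\<^sub>n\<^sub>,\<^sub>J - r(n,J))\<close>, where \<open>r(n,j) \<rightarrow> 0\<close> for fixed \<open>j\<close>
  and \<open>L(g)\<close> can be taken arbitrarily close to \<open>L\<^sup>*\<close>.\<close>

lemma square_diff_in_unit_interval:
  fixes a b :: real
  assumes "a \<in> {0..1}" "b \<in> {0..1}"
  shows "(a - b)\<^sup>2 \<in> {0..1}"
proof -
  have "\<bar>a - b\<bar> \<le> 1" using assms by auto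
  then show ?thesis by (simp add: abs_square_le_1)
qed

lemma risk_in_unit_interval:
  assumes "prob_space D" "sets D = sets borel"
    and D_supp: "AE z in D. z \<in> S \<times> {0..1}" and g: "g \<in> meas_fun S"
  shows "risk D g \<in> {0..1}"
proof -
  interpret prob_space D by fact
  have "(\<lambda>z::'a \<times> real. (g (fst z) - snd z)\<^sup>2) \<in> borel_measurable borel"
    using g by (auto simp: meas_fun_def borel_prod[symmetric])
  then have meas: "(\<lambda>z. (g (fst z) - snd z)\<^sup>2) \<in> borel_measurable D"
    using measurable_cong_sets[OF \<open>sets D = sets borel\<close> refl] by blast
  have bounded: "AE z in D. (g (fst z) - snd z)\<^sup>2 \<in> {0..1}"
    using D_supp by eventually_elim
      (rule square_diff_in_unit_interval; use g in \<open>auto simp: meas_fun_def\<close>)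
  have "integrable D (\<lambda>z. (g (fst z) - snd z)\<^sup>2)"
    by (rule integrable_const_bound[where B=1]) (use bounded meas in auto)
  then have "risk D g \<le> (\<integral>z. 1 \<partial>D)"
    unfolding risk_def by (rule integral_mono_AE) (use bounded in auto)
  moreover have "0 \<le> risk D g"
    unfolding risk_def by (rule integral_nonneg_AE) (use bounded in auto)
  ultimately show ?thesis using prob_space by simp
qed

lemma emp_risk_in_unit_interval:
  assumes "\<And>i. i \<in> {1..n} \<Longrightarrow> Z i \<omega> \<in> S \<times> {0..1}" and g: "g \<in> meas_fun S"
  shows "emp_risk Z n g \<omega> \<in> {0..1}"
proof -
  have terms: "(g (fst (Z i \<omega>)) - snd (Z i \<omega>))\<^sup>2 \<in> {0..1}" if "i \<in> {1..n}" for i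
    by (rule square_diff_in_unit_interval)
      (use assms(1)[OF that] g in \<open>auto simp: meas_fun_def mem_Times_iff\<close>)
  have "(\<Sum>i=1..n. (g (fst (Z i \<omega>)) - snd (Z i \<omega>))\<^sup>2) \<le> (\<Sum>i=1..n. 1)"
    by (rule sum_mono) (use terms in auto)
  moreover have "0 \<le> (\<Sum>i=1..n. (g (fst (Z i \<omega>)) - snd (Z i \<omega>))\<^sup>2)"
    by (rule sum_nonneg) (use terms in auto)
  ultimately show ?thesis
    unfolding emp_risk_def by (cases "n = 0") (auto simp: divide_le_eq)
qed

lemma srm_penalty_log_arg_ge_1:
  fixes m :: real
  assumes "j \<ge> 1" "n \<ge> 1" "m \<ge> 1"
  shows "2 * sqrt (real j) * m * real n \<ge> 1"
  using assms by (metis mult_ge1_I of_nat_1 of_nat_mono one_le_numeral real_sqrt_ge_one)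

lemma srm_penalty_nonneg:
  assumes "j \<ge> 1" "n \<ge> 1" "Mj j \<ge> 1"
  shows "srm_penalty Mj n j \<ge> 0"
  using srm_penalty_log_arg_ge_1[OF assms] by (simp add: srm_penalty_def)

lemma exp_srm_penalty:
  assumes "j \<ge> 1" "n \<ge> 1" "Mj j \<ge> 1"
  shows "exp (- real n * (srm_penalty Mj n j)\<^sup>2 / 128) = 1 / (2 * sqrt (real j) * Mj j * real n) ^ j"
proof -
  define x where "x = 2 * sqrt (real j) * Mj j * real n"
  have x: "x \<ge> 1" unfolding x_def by (rule srm_penalty_log_arg_ge_1[OF assms])
  have "real n * (srm_penalty Mj n j)\<^sup>2 / 128 = real j * ln x"
    using x \<open>n \<ge> 1\<close> by (simp add: srm_penalty_def x_def)
  then have "exp (- real n * (srm_penalty Mj n j)\<^sup>2 / 128) = exp (- ln (x ^ j))"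
    using x by (simp add: ln_realpow)
  also have "\<dots> = 1 / x ^ j"
    using x by (simp add: exp_minus inverse_eq_divide)
  finally show ?thesis unfolding x_def .
qed

lemma srm_penalty_tendsto_0:
  assumes "j \<ge> 1" "Mj j > 0"
  shows "(\<lambda>n. srm_penalty Mj n j) \<longlonglongrightarrow> 0"
proof -
  define a where "a = 2 * sqrt (real j) * Mj j"
  have "a > 0" using assms by (simp add: a_def)
  then have "(\<lambda>n. 128 * real j * ln (a * real n) / real n) \<longlonglongrightarrow> 0"
    by real_asymp
  then have "(\<lambda>n. sqrt (128 * real j * ln (a * real n) / real n)) \<longlonglongrightarrow> sqrt 0"
    by (intro tendsto_intros)
  then show ?thesis by (simp add: srm_penalty_def a_def)
qed

lemma tail_bound_at_penalty_le:
  fixes K e :: real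
  assumes "j \<ge> 1" "n \<ge> 1" "Mj j \<ge> 1" "e > 0" "K \<ge> 0"
  defines "r \<equiv> srm_penalty Mj n j"
  shows "K * 2 ^ j * sqrt (real j) ^ j * (Mj j / (e + r)) ^ j * exp (- real n * (e + r)\<^sup>2 / 128)
         \<le> K * exp (- real n * e\<^sup>2 / 128) / (e * real n) ^ j"
proof -
  have r: "r \<ge> 0" unfolding r_def using assms(1-3) by (rule srm_penalty_nonneg)
  have "e\<^sup>2 + r\<^sup>2 \<le> (e + r)\<^sup>2" using \<open>e > 0\<close> r by (simp add: power2_eq_square algebra_simps)
  then have "real n * e\<^sup>2 + real n * r\<^sup>2 \<le> real n * (e + r)\<^sup>2"
    by (metis distrib_left mult_left_mono of_nat_0_le_iff)
  then have "- real n * (e + r)\<^sup>2 / 128 \<le> - real n * e\<^sup>2 / 128 + - real n * r\<^sup>2 / 128"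
    by linarith
  then have "exp (- real n * (e + r)\<^sup>2 / 128)
      \<le> exp (- real n * e\<^sup>2 / 128) * exp (- real n * r\<^sup>2 / 128)"
    by (simp flip: exp_add)
  also have "\<dots> = exp (- real n * e\<^sup>2 / 128) * (1 / (2 * sqrt (real j) * Mj j * real n) ^ j)"
    unfolding r_def using assms by (subst exp_srm_penalty) auto
  finally have exp_le: "exp (- real n * (e + r)\<^sup>2 / 128)
      \<le> exp (- real n * e\<^sup>2 / 128) * (1 / (2 * sqrt (real j) * Mj j * real n) ^ j)" .
  have "(Mj j / (e + r)) ^ j \<le> (Mj j / e) ^ j"
    using assms r by (intro power_mono divide_left_mono) auto
  then have "K * 2 ^ j * sqrt (real j) ^ j * (Mj j / (e + r)) ^ j * exp (- real n * (e + r)\<^sup>2 / 128)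
      \<le> K * 2 ^ j * sqrt (real j) ^ j * (Mj j / e) ^ j
          * (exp (- real n * e\<^sup>2 / 128) * (1 / (2 * sqrt (real j) * Mj j * real n) ^ j))"
    using assms exp_le by (intro mult_mono mult_left_mono) auto
  also have "\<dots> = K * exp (- real n * e\<^sup>2 / 128) / (e * real n) ^ j"
    using assms by (simp add: field_simps)
  finally show ?thesis .
qed

lemma AE_eventually_for_all_pos:
  fixes P :: "real \<Rightarrow> nat \<Rightarrow> 'a \<Rightarrow> bool"
  assumes mono: "\<And>e e' n x. P e n x \<Longrightarrow> e \<le> e' \<Longrightarrow> P e' n x"
    and small: "\<And>e. 0 < e \<Longrightarrow> e < 1 \<Longrightarrow> AE x in M. eventually (\<lambda>n. P e n x) sequentially"
  shows "AE x in M. \<forall>e>0. eventually (\<lambda>n. P e n x) sequentially"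
proof -
  have "AE x in M. \<forall>k::nat. eventually (\<lambda>n. P (1 / (real k + 2)) n x) sequentially"
    unfolding AE_all_countable by (intro allI small) auto
  then show ?thesis
  proof (rule AE_mp, intro AE_I2 impI allI)
    fix x and e :: real
    assume all: "\<forall>k::nat. eventually (\<lambda>n. P (1 / (real k + 2)) n x) sequentially" and "e > 0"
    then obtain k where "inverse (real (Suc k)) < e" using reals_Archimedean by blast
    moreover have "1 / (real k + 2) \<le> inverse (real (Suc k))"
      by (auto simp: inverse_eq_divide intro!: divide_left_mono)
    ultimately have "1 / (real k + 2) \<le> e" by linarith
    moreover have "eventually (\<lambda>n. P (1 / (real k + 2)) n x) sequentially" using all ..
    ultimately show "eventually (\<lambda>n. P e n x) sequentially"
      by (auto elim: eventually_mono intro: mono)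
  qed
qed

context prob_space
begin

lemma AE_eventually_notin_if_prob_le_exp:
  assumes "a > 0"
    and "eventually (\<lambda>n. A n \<in> events \<and> prob (A n) \<le> C * exp (- a * real n)) sequentially"
  shows "AE x in M. eventually (\<lambda>n. x \<notin> A n) sequentially"
proof -
  obtain N where N: "\<And>n. n \<ge> N \<Longrightarrow> A n \<in> events \<and> prob (A n) \<le> C * exp (- a * real n)"
    using assms(2) by (auto simp: eventually_sequentially)
  define B where "B n = (if n \<ge> N then A n else {})" for n
  have "summable (\<lambda>n. C * exp (- a) ^ n)"
    using \<open>a > 0\<close> by (intro summable_mult summable_geometric) auto
  then have "summable (\<lambda>n. C * exp (- a * real n))"
    by (simp add: mult.commute flip: exp_of_nat_mult)
  then have "summable (\<lambda>n. prob (B n))"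
    by (rule summable_comparison_test'[where N=N]) (use N in \<open>auto simp: B_def\<close>)
  then have "AE x in M. eventually (\<lambda>n. x \<in> space M - B n) sequentially"
    by (intro borel_cantelli_AE1) (use N in \<open>auto simp: B_def emeasure_eq_measure\<close>)
  then show ?thesis
  proof (rule AE_mp, intro AE_I2 impI)
    fix x assume "eventually (\<lambda>n. x \<in> space M - B n) sequentially"
    then show "eventually (\<lambda>n. x \<notin> A n) sequentially"
      using eventually_ge_at_top[of N] by eventually_elim (auto simp: B_def)
  qed
qed

context
  fixes X :: "nat \<Rightarrow> nat \<Rightarrow> 'a \<Rightarrow> real" and K :: real and Mj :: "nat \<Rightarrow> real"
  assumes X_measurable: "\<And>n j. n \<ge> 1 \<Longrightarrow> j \<ge> 1 \<Longrightarrow> X n j \<in> borel_measurable M"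
    and X_le_1: "\<And>n j x. n \<ge> 1 \<Longrightarrow> j \<ge> 1 \<Longrightarrow> x \<in> space M \<Longrightarrow> X n j x \<le> 1"
    and K_nonneg: "K \<ge> 0"
    and Mj_ge_1: "\<And>j. j \<ge> 1 \<Longrightarrow> Mj j \<ge> 1"
    and tail_bound: "\<And>n j \<epsilon>. n \<ge> 1 \<Longrightarrow> j \<ge> 1 \<Longrightarrow> 0 < \<epsilon> \<Longrightarrow> \<epsilon> < 1 \<Longrightarrow>
          prob {x \<in> space M. X n j x > \<epsilon>}
            \<le> K * 2 ^ j * sqrt (real j) ^ j * (Mj j / \<epsilon>) ^ j * exp (- real n * \<epsilon>\<^sup>2 / 128)"
begin

lemma prob_gt_srm_penalty_le:
  assumes "n \<ge> 1" "j \<ge> 1" "\<epsilon> > 0"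
  shows "prob {x \<in> space M. X n j x > \<epsilon> + srm_penalty Mj n j}
           \<le> K * exp (- real n * \<epsilon>\<^sup>2 / 128) / (\<epsilon> * real n) ^ j"
proof (cases "\<epsilon> + srm_penalty Mj n j < 1")
  case True
  have "srm_penalty Mj n j \<ge> 0" using assms Mj_ge_1 by (intro srm_penalty_nonneg) auto
  then have "prob {x \<in> space M. X n j x > \<epsilon> + srm_penalty Mj n j}
      \<le> K * 2 ^ j * sqrt (real j) ^ j * (Mj j / (\<epsilon> + srm_penalty Mj n j)) ^ j
          * exp (- real n * (\<epsilon> + srm_penalty Mj n j)\<^sup>2 / 128)"
    using True assms by (intro tail_bound) auto
  also have "\<dots> \<le> K * exp (- real n * \<epsilon>\<^sup>2 / 128) / (\<epsilon> * real n) ^ j"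
    by (rule tail_bound_at_penalty_le) (use assms K_nonneg Mj_ge_1 in auto)
  finally show ?thesis .
next
  case False
  have empty: "{x \<in> space M. X n j x > \<epsilon> + srm_penalty Mj n j} = {}"
    using False by (auto simp: not_less intro: order_trans[OF X_le_1[OF assms(1,2)]])
  show ?thesis unfolding empty using K_nonneg assms by simp
qed

lemma AE_eventually_le_srm_penalty:
  "AE x in M. \<forall>\<epsilon>>0. eventually (\<lambda>n. \<forall>j\<ge>1. X n j x \<le> \<epsilon> + srm_penalty Mj n j) sequentially"
proof (rule AE_eventually_for_all_pos)
  show "\<forall>j\<ge>1. X n j x \<le> e' + srm_penalty Mj n j"
    if "\<forall>j\<ge>1. X n j x \<le> e + srm_penalty Mj n j" "e \<le> e'" for e e' n x
    using that by force
next
  fix \<epsilon> :: real assume \<epsilon>: "0 < \<epsilon>" "\<epsilon> < 1"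
  define A where "A n = (\<Union>j. {x \<in> space M. X n (Suc j) x > \<epsilon> + srm_penalty Mj n (Suc j)})" for n
  obtain N :: nat where N: "2 / \<epsilon> < real N" using reals_Archimedean2 by blast
  have bound: "A n \<in> events \<and> prob (A n) \<le> K * exp (- (\<epsilon>\<^sup>2 / 128) * real n)"
    if "n \<ge> max 1 N" for n
  proof -
    have "2 < \<epsilon> * real N" using N \<epsilon> by (simp add: divide_less_eq mult.commute)
    also have "\<dots> \<le> \<epsilon> * real n" using that \<epsilon> by (intro mult_left_mono) auto
    finally have n: "n \<ge> 1" "2 \<le> \<epsilon> * real n" using that by auto
    define c where "c = K * exp (- (\<epsilon>\<^sup>2 / 128) * real n)"
    have events: "range (\<lambda>j. {x \<in> space M. X n (Suc j) x > \<epsilon> + srm_penalty Mj n (Suc j)}) \<subseteq> events"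
      using X_measurable n by auto
    have geometric: "prob {x \<in> space M. X n (Suc j) x > \<epsilon> + srm_penalty Mj n (Suc j)}
        \<le> c / 2 * (1 / 2) ^ j" for j
    proof -
      have "prob {x \<in> space M. X n (Suc j) x > \<epsilon> + srm_penalty Mj n (Suc j)}
          \<le> c / (\<epsilon> * real n) ^ Suc j"
        using prob_gt_srm_penalty_le[of n "Suc j" \<epsilon>] n \<epsilon> by (simp add: c_def mult.commute)
      also have "\<dots> \<le> c / 2 ^ Suc j"
        using n K_nonneg by (intro divide_left_mono power_mono) (auto simp: c_def)
      finally show ?thesis by (simp add: power_divide)
    qed
    have summable: "summable (\<lambda>j. c / 2 * (1 / 2 :: real) ^ j)"
      by (intro summable_mult summable_geometric) auto
    have "prob (A n) \<le> (\<Sum>j. prob {x \<in> space M. X n (Suc j) x > \<epsilon> + srm_penalty Mj n (Suc j)})"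
      unfolding A_def
      by (rule finite_measure_subadditive_countably[OF events])
        (rule summable_comparison_test'[OF summable, of 0]; use geometric in simp)
    also have "\<dots> \<le> (\<Sum>j. c / 2 * (1 / 2) ^ j)"
      by (rule suminf_le[OF geometric _ summable])
        (rule summable_comparison_test'[OF summable, of 0]; use geometric in simp)
    also have "\<dots> = c"
      using suminf_mult[OF summable_geometric, of "1 / 2 :: real" "c / 2"]
      by (simp add: suminf_geometric)
    finally show ?thesis using events by (auto simp: A_def c_def)
  qed
  have "AE x in M. eventually (\<lambda>n. x \<notin> A n) sequentially"
    by (rule AE_eventually_notin_if_prob_le_exp[OF _ eventually_sequentiallyI[OF bound]])
      (use \<epsilon> in simp)
  then show "AE x in M. eventually (\<lambda>n. \<forall>j\<ge>1. X n j x \<le> \<epsilon> + srm_penalty Mj n j) sequentially"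
  proof (rule AE_mp, intro AE_I2 impI)
    fix x assume x: "x \<in> space M" and ev: "eventually (\<lambda>n. x \<notin> A n) sequentially"
    from ev show "eventually (\<lambda>n. \<forall>j\<ge>1. X n j x \<le> \<epsilon> + srm_penalty Mj n j) sequentially"
    proof (rule eventually_mono)
      fix n assume "x \<notin> A n"
      then have "X n (Suc i) x \<le> \<epsilon> + srm_penalty Mj n (Suc i)" for i
        using x by (auto simp: A_def not_less)
      then show "\<forall>j\<ge>1. X n j x \<le> \<epsilon> + srm_penalty Mj n j" by (metis One_nat_def Suc_le_D)
    qed
  qed
qed

end

end

definition unif_dev ::
    "('a::euclidean_space \<times> real) measure \<Rightarrow> (nat \<Rightarrow> 'w \<Rightarrow> 'a \<times> real) \<Rightarrow> ('a \<Rightarrow> real) set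
      \<Rightarrow> nat \<Rightarrow> 'w \<Rightarrow> real" where
  "unif_dev D Z G n \<omega> = (SUP g\<in>G. \<bar>risk D g - emp_risk Z n g \<omega>\<bar>)"

locale srm_setting = prob_space M
  for M :: "'w measure" +
  fixes D :: "('a::euclidean_space \<times> real) measure"
    and Z :: "nat \<Rightarrow> 'w \<Rightarrow> 'a \<times> real"
    and S :: "'a set"
    and G :: "nat \<Rightarrow> ('a \<Rightarrow> real) set"
    and K :: real
    and Mj :: "nat \<Rightarrow> real"
    and ghat :: "nat \<Rightarrow> nat \<Rightarrow> 'w \<Rightarrow> 'a \<Rightarrow> real"
    and J :: "nat \<Rightarrow> 'w \<Rightarrow> nat"
  assumes prob_space_D: "prob_space D"
    and sets_D: "sets D = sets borel"
    and D_supp: "AE z in D. z \<in> S \<times> {0..1}"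
    and Z_vals: "\<And>i \<omega>. i \<ge> 1 \<Longrightarrow> \<omega> \<in> space M \<Longrightarrow> Z i \<omega> \<in> S \<times> {0..1}"
    and G_sub: "\<And>j. j \<ge> 1 \<Longrightarrow> G j \<subseteq> meas_fun S"
    and unif_dev_measurable:
      "\<And>n j. n \<ge> 1 \<Longrightarrow> j \<ge> 1 \<Longrightarrow> unif_dev D Z (G j) n \<in> borel_measurable M"
    and K_nonneg: "K \<ge> 0"
    and Mj_ge_1: "\<And>j. j \<ge> 1 \<Longrightarrow> Mj j \<ge> 1"
    and tail_bound: "\<And>n j \<epsilon>. n \<ge> 1 \<Longrightarrow> j \<ge> 1 \<Longrightarrow> 0 < \<epsilon> \<Longrightarrow> \<epsilon> < 1 \<Longrightarrow>
          prob {\<omega> \<in> space M. unif_dev D Z (G j) n \<omega> > \<epsilon>}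
            \<le> K * 2 ^ j * sqrt (real j) ^ j * (Mj j / \<epsilon>) ^ j * exp (- real n * \<epsilon>\<^sup>2 / 128)"
    and ghat_mem: "\<And>n j \<omega>. n \<ge> 1 \<Longrightarrow> j \<ge> 1 \<Longrightarrow> \<omega> \<in> space M \<Longrightarrow> ghat n j \<omega> \<in> G j"
    and ghat_min: "\<And>n j \<omega> g. n \<ge> 1 \<Longrightarrow> j \<ge> 1 \<Longrightarrow> \<omega> \<in> space M \<Longrightarrow> g \<in> G j \<Longrightarrow>
          emp_risk Z n (ghat n j \<omega>) \<omega> \<le> emp_risk Z n g \<omega>"
    and J_ge_1: "\<And>n \<omega>. n \<ge> 1 \<Longrightarrow> \<omega> \<in> space M \<Longrightarrow> J n \<omega> \<ge> 1"
    and J_min: "\<And>n j \<omega>. n \<ge> 1 \<Longrightarrow> j \<ge> 1 \<Longrightarrow> \<omega> \<in> space M \<Longrightarrow>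
          emp_risk Z n (ghat n (J n \<omega>) \<omega>) \<omega> + srm_penalty Mj n (J n \<omega>)
            \<le> emp_risk Z n (ghat n j \<omega>) \<omega> + srm_penalty Mj n j"
    and approx: "(INF j\<in>{1..}. INF g\<in>G j. risk D g) = bayes_risk D S"
begin

abbreviation deviation :: "nat \<Rightarrow> nat \<Rightarrow> 'w \<Rightarrow> real" where
  "deviation n j \<equiv> unif_dev D Z (G j) n"

abbreviation srm_estimate :: "nat \<Rightarrow> 'w \<Rightarrow> 'a \<Rightarrow> real" where
  "srm_estimate n \<omega> \<equiv> ghat n (J n \<omega>) \<omega>"

lemma G_nonempty: "j \<ge> 1 \<Longrightarrow> G j \<noteq> {}"
  using ghat_mem[of 1 j] not_empty by blast

lemma risk_mem_unit_interval: "g \<in> meas_fun S \<Longrightarrow> risk D g \<in> {0..1}"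
  by (rule risk_in_unit_interval[OF prob_space_D sets_D D_supp])

lemma abs_risk_minus_emp_risk_le_1:
  assumes "j \<ge> 1" "\<omega> \<in> space M" "g \<in> G j"
  shows "\<bar>risk D g - emp_risk Z n g \<omega>\<bar> \<le> 1"
proof -
  have g: "g \<in> meas_fun S" using G_sub assms by blast
  have "risk D g \<in> {0..1}" using g by (rule risk_mem_unit_interval)
  moreover have "emp_risk Z n g \<omega> \<in> {0..1}"
    by (rule emp_risk_in_unit_interval[OF _ g]) (use Z_vals assms in auto)
  ultimately show ?thesis by auto
qed

lemma abs_risk_minus_emp_risk_le_deviation:
  assumes "j \<ge> 1" "\<omega> \<in> space M" "g \<in> G j"
  shows "\<bar>risk D g - emp_risk Z n g \<omega>\<bar> \<le> deviation n j \<omega>"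
  unfolding unif_dev_def using assms abs_risk_minus_emp_risk_le_1
  by (intro cSUP_upper bdd_aboveI2[where M=1]) auto

lemma deviation_le_1: "j \<ge> 1 \<Longrightarrow> \<omega> \<in> space M \<Longrightarrow> deviation n j \<omega> \<le> 1"
  unfolding unif_dev_def using G_nonempty abs_risk_minus_emp_risk_le_1 by (intro cSUP_least) auto

lemma AE_eventually_deviation_le_srm_penalty:
  "AE \<omega> in M. \<forall>\<epsilon>>0. eventually (\<lambda>n. \<forall>j\<ge>1. deviation n j \<omega> \<le> \<epsilon> + srm_penalty Mj n j) sequentially"
  by (rule AE_eventually_le_srm_penalty)
    (use unif_dev_measurable deviation_le_1 K_nonneg Mj_ge_1 tail_bound in auto)

lemma risk_srm_estimate_le:
  assumes n: "n \<ge> 1" and \<omega>: "\<omega> \<in> space M" and j: "j \<ge> 1" and g: "g \<in> G j"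
  shows "risk D (srm_estimate n \<omega>)
    \<le> risk D g + deviation n j \<omega> + srm_penalty Mj n j
        + (deviation n (J n \<omega>) \<omega> - srm_penalty Mj n (J n \<omega>))"
proof -
  have J: "J n \<omega> \<ge> 1" using n \<omega> by (rule J_ge_1)
  have "risk D (srm_estimate n \<omega>) \<le> emp_risk Z n (srm_estimate n \<omega>) \<omega> + deviation n (J n \<omega>) \<omega>"
    using abs_risk_minus_emp_risk_le_deviation[OF J \<omega> ghat_mem[OF n J \<omega>], where n=n] by linarith
  also have "emp_risk Z n (srm_estimate n \<omega>) \<omega>
      \<le> emp_risk Z n (ghat n j \<omega>) \<omega> + srm_penalty Mj n j - srm_penalty Mj n (J n \<omega>)"
    using J_min[OF n j \<omega>] by linarith
  also have "emp_risk Z n (ghat n j \<omega>) \<omega> \<le> emp_risk Z n g \<omega>"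
    by (rule ghat_min[OF n j \<omega> g])
  also have "emp_risk Z n g \<omega> \<le> risk D g + deviation n j \<omega>"
    using abs_risk_minus_emp_risk_le_deviation[OF j \<omega> g, where n=n] by linarith
  finally show ?thesis by linarith
qed

lemma bayes_risk_le_risk:
  assumes "j \<ge> 1" "g \<in> G j"
  shows "bayes_risk D S \<le> risk D g"
  unfolding bayes_risk_def using assms G_sub risk_mem_unit_interval
  by (intro cINF_lower bdd_belowI2[where m=0]) auto

lemma ex_risk_less_bayes_risk:
  assumes "\<delta> > 0"
  shows "\<exists>j\<ge>1. \<exists>g\<in>G j. risk D g < bayes_risk D S + \<delta>"
proof -
  have "bdd_below ((\<lambda>j. INF g\<in>G j. risk D g) ` {1..})"
    using G_nonempty bayes_risk_le_risk by (intro bdd_belowI2[where m="bayes_risk D S"] cINF_greatest) auto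
  moreover have "(INF j\<in>{1..}. INF g\<in>G j. risk D g) < bayes_risk D S + \<delta>"
    using approx assms by simp
  ultimately obtain j where j: "j \<ge> 1" and "(INF g\<in>G j. risk D g) < bayes_risk D S + \<delta>"
    by (auto simp: cINF_less_iff)
  moreover have "bdd_below (risk D ` G j)"
    using j bayes_risk_le_risk by (intro bdd_belowI2[where m="bayes_risk D S"]) auto
  ultimately show ?thesis using G_nonempty[OF j] by (auto simp: cINF_less_iff)
qed

lemma srm_risk_tendsto_bayes_risk:
  assumes \<omega>: "\<omega> \<in> space M"
    and small_dev: "\<forall>\<epsilon>>0. eventually (\<lambda>n. \<forall>j\<ge>1. deviation n j \<omega> \<le> \<epsilon> + srm_penalty Mj n j) sequentially"
  shows "(\<lambda>n. risk D (srm_estimate n \<omega>)) \<longlonglongrightarrow> bayes_risk D S"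
proof (rule order_tendstoI)
  fix a assume "a < bayes_risk D S"
  moreover have "bayes_risk D S \<le> risk D (srm_estimate n \<omega>)" if "n \<ge> 1" for n
    using J_ge_1[OF that \<omega>] ghat_mem[OF that J_ge_1[OF that \<omega>] \<omega>] by (rule bayes_risk_le_risk)
  ultimately show "eventually (\<lambda>n. a < risk D (srm_estimate n \<omega>)) sequentially"
    by (intro eventually_sequentiallyI[of 1]) (auto intro: less_le_trans)
next
  fix a assume "bayes_risk D S < a"
  define \<delta> where "\<delta> = (a - bayes_risk D S) / 5"
  have \<delta>: "\<delta> > 0" using \<open>bayes_risk D S < a\<close> by (simp add: \<delta>_def)
  obtain j g where j: "j \<ge> 1" and g: "g \<in> G j" and risk_g: "risk D g < bayes_risk D S + \<delta>"
    using ex_risk_less_bayes_risk[OF \<delta>] by blast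
  have "(\<lambda>n. srm_penalty Mj n j) \<longlonglongrightarrow> 0"
    using j Mj_ge_1[OF j] by (intro srm_penalty_tendsto_0) auto
  then have "eventually (\<lambda>n. srm_penalty Mj n j < \<delta>) sequentially"
    using \<delta> by (rule order_tendstoD)
  with small_dev[rule_format, OF \<delta>] eventually_ge_at_top[of 1]
  show "eventually (\<lambda>n. risk D (srm_estimate n \<omega>) < a) sequentially"
  proof eventually_elim
    case (elim n)
    then have n: "n \<ge> 1" and pen_j: "srm_penalty Mj n j < \<delta>" by simp_all
    have "deviation n j \<omega> \<le> \<delta> + srm_penalty Mj n j"
      and "deviation n (J n \<omega>) \<omega> \<le> \<delta> + srm_penalty Mj n (J n \<omega>)"
      using elim j J_ge_1[OF n \<omega>] by auto
    moreover have "a = bayes_risk D S + 5 * \<delta>" by (simp add: \<delta>_def field_simps)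
    ultimately show ?case using pen_j risk_g risk_srm_estimate_le[OF n \<omega> j g] by linarith
  qed
qed

theorem srm_strongly_consistent:
  "AE \<omega> in M. (\<lambda>n. risk D (srm_estimate n \<omega>)) \<longlonglongrightarrow> bayes_risk D S"
  using AE_eventually_deviation_le_srm_penalty
  by (rule AE_mp) (rule AE_I2, blast intro: srm_risk_tendsto_bayes_risk)

end

theorem mainTheorem3:
  fixes M :: "'w measure"
    and D :: "('a::euclidean_space \<times> real) measure"
    and Z :: "nat \<Rightarrow> 'w \<Rightarrow> 'a \<times> real"
    and S :: "'a set"
    and G :: "nat \<Rightarrow> ('a \<Rightarrow> real) set"
    and K :: real
    and Mj :: "nat \<Rightarrow> real"
    and ghat :: "nat \<Rightarrow> nat \<Rightarrow> 'w \<Rightarrow> ('a \<Rightarrow> real)"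
    and J :: "nat \<Rightarrow> 'w \<Rightarrow> nat"
  assumes probM: "prob_space M"
    and probD: "prob_space D"
    and D_supp: "AE z in D. z \<in> S \<times> {0..1}"
    and indep: "prob_space.indep_vars M (\<lambda>_. borel) Z {1..}"
    and distr_Z: "\<forall>i\<ge>1. distr M borel (Z i) = D"
    and Z_vals: "\<forall>i\<ge>1. \<forall>\<omega>\<in>space M. Z i \<omega> \<in> S \<times> {0..1}"
    and G_sub: "\<forall>j\<ge>1. G j \<subseteq> meas_fun S"
    and sup_meas: "\<forall>j\<ge>1. \<forall>n\<ge>1.
          (\<lambda>\<omega>. SUP g\<in>G j. \<bar>risk D g - emp_risk Z n g \<omega>\<bar>) \<in> borel_measurable M"
    and K_pos: "K > 0"
    and Mj_ge: "\<forall>j\<ge>1. Mj j \<ge> 1"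
    and bound: "\<forall>j\<ge>1. \<forall>n\<ge>1. \<forall>\<epsilon>. 0 < \<epsilon> \<and> \<epsilon> < 1 \<longrightarrow>
          measure M {\<omega>\<in>space M. (SUP g\<in>G j. \<bar>risk D g - emp_risk Z n g \<omega>\<bar>) > \<epsilon>}
            \<le> K * 2 ^ j * sqrt (real j) ^ j * (Mj j / \<epsilon>) ^ j * exp (- real n * \<epsilon>\<^sup>2 / 128)"
    and ghat_min: "\<forall>n\<ge>1. \<forall>j\<ge>1. \<forall>\<omega>\<in>space M. ghat n j \<omega> \<in> G j \<and>
          (\<forall>g\<in>G j. emp_risk Z n (ghat n j \<omega>) \<omega> \<le> emp_risk Z n g \<omega>)"
    and J_min: "\<forall>n\<ge>1. \<forall>\<omega>\<in>space M. J n \<omega> \<ge> 1 \<and>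
          (\<forall>j\<ge>1. emp_risk Z n (ghat n (J n \<omega>) \<omega>) \<omega> + srm_penalty Mj n (J n \<omega>)
                   \<le> emp_risk Z n (ghat n j \<omega>) \<omega> + srm_penalty Mj n j)"
    and approx: "(INF j\<in>{1..}. INF g\<in>G j. risk D g) = bayes_risk D S"
  shows "AE \<omega> in M. (\<lambda>n. risk D (ghat n (J n \<omega>) \<omega>)) \<longlonglongrightarrow> bayes_risk D S"
proof -
  \<comment> \<open>The independence of the sample is used only through the assumed deviation bound.\<close>
  have "sets D = sets borel"
    using distr_Z by (metis le_refl sets_distr)
  interpret srm_setting M D Z S G K Mj ghat J
    by (intro srm_setting.intro[OF probM] srm_setting_axioms.intro)
      (use assms \<open>sets D = sets borel\<close> in \<open>simp_all add: unif_dev_def[abs_def]\<close>)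
  show ?thesis by (rule srm_strongly_consistent)
qed

end
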